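(* Let $(E,\rho_\theta)$ be a complete $b_v(\theta)$ metric space whose function $\theta$ is bounded, and let $S:E\to E$ be such that there is $c\in[0,1)$ with $\rho_\theta(Su,Sw)\le c\,\rho_\theta(u,w)$ for all $u,w\in E$. Then $S$ has a unique fixed point.
   Context: Let $E$ be a nonempty set, $\theta:E\times E\to[1,\infty)$ a function and $v\in\mathbb{N}$. A map $\rho_\theta:E\times E\to[0,\infty)$ is a $b_v(\theta)$ metric (and $(E,\rho_\theta)$ a $b_v(\theta)$ metric space) if for all $u,w\in E$: $\rho_\theta(u,w)=0$ iff $u=w$; $\rho_\theta(u,w)=\rho_\theta(w,u)$; and for all $u,z_1,\dots,z_v,w\in E$ pairwise distinct, $\rho_\theta(u,w)\le\theta(u,w)[\rho_\theta(u,z_1)+\rho_\theta(z_1,z_2)+\dots+\rho_\theta(z_{v-1},z_v)+\rho_\theta(z_v,w)]$. A sequence $\{u_n\}$ converges to $u$ if for every $\varepsilon>0$ there is $n_0$ with $\rho_\theta(u_n,u)<\varepsilon$ for all $n\ge n_0$; it is Cauchy if for every $\varepsilon>0$ there is $n_0$ with $\rho_\theta(u_n,u_{n+p})<\varepsilon$ for all $n\ge n_0$ and $p>0$; the space is complete if every Cauchy sequence converges in $E$. *)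

theory Defs
  imports "HOL-Analysis.Analysis"
begin

text \<open>The intermediate points z_1,...,z_v are given by a
function z on indices 1..v; u, z 1, ..., z v, w are required pairwise distinct.\<close>

definition bv_metric :: "nat \<Rightarrow> ('a \<Rightarrow> 'a \<Rightarrow> real) \<Rightarrow> ('a \<Rightarrow> 'a \<Rightarrow> real) \<Rightarrow> bool" where
  "bv_metric v \<theta> \<rho> \<longleftrightarrow>
     (\<forall>u w. \<theta> u w \<ge> 1) \<and>
     (\<forall>u w. \<rho> u w \<ge> 0) \<and>
     (\<forall>u w. \<rho> u w = 0 \<longleftrightarrow> u = w) \<and>
     (\<forall>u w. \<rho> u w = \<rho> w u) \<and>
     (\<forall>u w (z::nat \<Rightarrow> 'a).
        (let p = (\<lambda>i. if i = 0 then u else if i = Suc v then w else z i) in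
           inj_on p {0..Suc v}) \<longrightarrow>
        \<rho> u w \<le> \<theta> u w * (\<rho> u (z 1) + (\<Sum>i\<in>{1..<v}. \<rho> (z i) (z (Suc i))) + \<rho> (z v) w))"

definition bv_converges :: "('a \<Rightarrow> 'a \<Rightarrow> real) \<Rightarrow> (nat \<Rightarrow> 'a) \<Rightarrow> 'a \<Rightarrow> bool" where
  "bv_converges \<rho> x l \<longleftrightarrow> (\<forall>\<epsilon>>0. \<exists>n0. \<forall>n\<ge>n0. \<rho> (x n) l < \<epsilon>)"

definition bv_cauchy :: "('a \<Rightarrow> 'a \<Rightarrow> real) \<Rightarrow> (nat \<Rightarrow> 'a) \<Rightarrow> bool" where
  "bv_cauchy \<rho> x \<longleftrightarrow> (\<forall>\<epsilon>>0. \<exists>n0. \<forall>n\<ge>n0. \<forall>p>0. \<rho> (x n) (x (n + p)) < \<epsilon>)"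

definition bv_complete :: "('a \<Rightarrow> 'a \<Rightarrow> real) \<Rightarrow> bool" where
  "bv_complete \<rho> \<longleftrightarrow> (\<forall>x. bv_cauchy \<rho> x \<longrightarrow> (\<exists>l. bv_converges \<rho> x l))"

end

theory Submission
  imports Defs
begin

(* A b_v(theta) metric satisfies a polygon inequality only along pairwise distinct points,
   so the contraction argument has to keep its chains injective. If S had no fixed point,
   every Picard orbit x_n = S^n x_0 would be injective. Bounding theta by M and choosing
   N >= v with M c^N < 1, the chain x_0, x_1, ..., x_(v-1), x_N, x_p gives
   rho(x_0, x_p) <= M K + M c^N rho(x_0, x_(p-N)) with K independent of p, so the orbit is
   bounded; since rho(x_n, x_(n+p)) <= c^n rho(x_0, x_p), it is Cauchy. Its limit l is a
   fixed point, because the chain l, x_(n+1), ..., x_(n+v), S l has length tending to 0. *)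

lemma bv_metric_theta_ge_1: "bv_metric v \<theta> \<rho> \<Longrightarrow> \<theta> u w \<ge> 1"
  and bv_metric_nonneg: "bv_metric v \<theta> \<rho> \<Longrightarrow> \<rho> u w \<ge> 0"
  and bv_metric_eq_0_iff: "bv_metric v \<theta> \<rho> \<Longrightarrow> \<rho> u w = 0 \<longleftrightarrow> u = w"
  and bv_metric_commute: "bv_metric v \<theta> \<rho> \<Longrightarrow> \<rho> u w = \<rho> w u"
  unfolding bv_metric_def by auto

lemma bv_metric_polygon:
  assumes "bv_metric v \<theta> \<rho>" and "\<theta> u w \<le> M"
    and "inj_on z {1..v}" and "u \<notin> z ` {1..v}" and "w \<notin> z ` {1..v}" and "u \<noteq> w"
  shows "\<rho> u w \<le> M * (\<rho> u (z 1) + (\<Sum>i\<in>{1..<v}. \<rho> (z i) (z (Suc i))) + \<rho> (z v) w)"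
proof -
  let ?polygon = "\<rho> u (z 1) + (\<Sum>i\<in>{1..<v}. \<rho> (z i) (z (Suc i))) + \<rho> (z v) w"
  have "inj_on (\<lambda>i. if i = 0 then u else if i = Suc v then w else z i) {0..Suc v}"
    using assms(3-6) by (intro inj_onI) (auto simp: inj_on_eq_iff split: if_splits)
  then have "\<rho> u w \<le> \<theta> u w * ?polygon"
    using assms(1) unfolding bv_metric_def Let_def by blast
  also have "\<dots> \<le> M * ?polygon"
    using assms(2) bv_metric_nonneg[OF assms(1)]
    by (intro mult_right_mono add_nonneg_nonneg sum_nonneg) auto
  finally show ?thesis .
qed

lemma bv_metric_eq_if_le_scaled:
  assumes "bv_metric v \<theta> \<rho>" and "k < 1" and "\<rho> a b \<le> k * \<rho> a b"
  shows "a = b"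
proof -
  have "(1 - k) * \<rho> a b \<le> 0" using assms(3) by (simp add: algebra_simps)
  then have "\<rho> a b \<le> 0" using assms(2) by (simp add: mult_le_0_iff)
  then show ?thesis
    using bv_metric_nonneg[OF assms(1)] bv_metric_eq_0_iff[OF assms(1)] by (meson antisym)
qed

lemma bv_converges_iff_tendsto:
  assumes "bv_metric v \<theta> \<rho>"
  shows "bv_converges \<rho> x l \<longleftrightarrow> (\<lambda>n. \<rho> (x n) l) \<longlonglongrightarrow> 0"
  using bv_metric_nonneg[OF assms] unfolding bv_converges_def LIMSEQ_iff by simp

lemma contraction_funpow_le:
  fixes \<rho> :: "'a \<Rightarrow> 'a \<Rightarrow> real"
  assumes "0 \<le> c" and "\<forall>u w. \<rho> (S u) (S w) \<le> c * \<rho> u w"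
  shows "\<rho> ((S ^^ n) a) ((S ^^ n) b) \<le> c ^ n * \<rho> a b"
proof (induction n)
  case 0
  then show ?case by simp
next
  case (Suc n)
  have "\<rho> ((S ^^ Suc n) a) ((S ^^ Suc n) b) \<le> c * \<rho> ((S ^^ n) a) ((S ^^ n) b)"
    using assms(2) by simp
  also have "\<dots> \<le> c * (c ^ n * \<rho> a b)"
    using Suc.IH assms(1) by (rule mult_left_mono)
  finally show ?case by simp
qed

lemma contraction_fixpoint_unique:
  assumes "bv_metric v \<theta> \<rho>" and "c < 1" and "\<forall>u w. \<rho> (S u) (S w) \<le> c * \<rho> u w"
    and "S x = x" and "S y = y"
  shows "x = y"
  using assms(1,2) by (rule bv_metric_eq_if_le_scaled) (metis assms(3-5))

lemma orbit_inj_if_no_fixpoint: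
  assumes "bv_metric v \<theta> \<rho>" and "0 \<le> c" and "c < 1"
    and "\<forall>u w. \<rho> (S u) (S w) \<le> c * \<rho> u w" and "\<forall>x. S x \<noteq> x"
  shows "inj (\<lambda>n. (S ^^ n) x0)"
proof (rule linorder_injI)
  fix a b :: nat
  assume "a < b"
  define y where "y = (S ^^ a) x0"
  define q where "q = b - a"
  show "(S ^^ a) x0 \<noteq> (S ^^ b) x0"
  proof
    assume same: "(S ^^ a) x0 = (S ^^ b) x0"
    have "(S ^^ q) y = (S ^^ (q + a)) x0" by (simp add: y_def funpow_add)
    then have period: "(S ^^ q) y = y"
      using same \<open>a < b\<close> by (simp add: y_def q_def)
    then have "(S ^^ q) (S y) = S y" by (metis funpow_swap1)
    then have "\<rho> y (S y) \<le> c ^ q * \<rho> y (S y)"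
      using contraction_funpow_le[OF assms(2,4), of q y "S y"] period by simp
    moreover have "c ^ q < 1"
      using \<open>a < b\<close> assms(2,3) by (simp add: q_def power_less_one_iff)
    ultimately have "y = S y" by (intro bv_metric_eq_if_le_scaled[OF assms(1)])
    then show False using assms(5) by metis
  qed
qed

lemma bounded_above_if_shift_recurrence:
  fixes b :: "nat \<Rightarrow> real"
  assumes "N > 0" and "0 \<le> r" and "r < 1" and "\<And>p. p > N \<Longrightarrow> b p \<le> A + r * b (p - N)"
  shows "\<exists>B. \<forall>p. b p \<le> B"
proof -
  define B where "B = max (Max (b ` {..N})) (A / (1 - r))"
  have "A / (1 - r) \<le> B" by (simp add: B_def)
  then have fixed: "A + r * B \<le> B" using assms(3) by (simp add: field_simps)
  have "b p \<le> B" for p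
  proof (induction p rule: less_induct)
    case (less p)
    show ?case
    proof (cases "p \<le> N")
      case True
      then have "b p \<le> Max (b ` {..N})" by (intro Max_ge) auto
      then show ?thesis by (simp add: B_def)
    next
      case False
      then have "b p \<le> A + r * b (p - N)" by (intro assms(4)) simp
      also have "\<dots> \<le> A + r * B"
        using less.IH[of "p - N"] False assms(1,2) by (simp add: mult_left_mono)
      finally show ?thesis using fixed by linarith
    qed
  qed
  then show ?thesis by blast
qed

lemma orbit_bounded:
  assumes "v \<ge> 1" and "bv_metric v \<theta> \<rho>" and "\<forall>u w. \<theta> u w \<le> M"
    and "0 \<le> c" and "c < 1" and "\<forall>u w. \<rho> (S u) (S w) \<le> c * \<rho> u w"
    and "inj (\<lambda>n. (S ^^ n) x0)"
  shows "\<exists>B. \<forall>p. \<rho> x0 ((S ^^ p) x0) \<le> B"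
proof -
  define x where "x = (\<lambda>n. (S ^^ n) x0)"
  have "inj x" unfolding x_def by (rule assms(7))
  have "M \<ge> 1"
    using bv_metric_theta_ge_1[OF assms(2), of x0 x0] assms(3)[rule_format, of x0 x0] by linarith
  have "(\<lambda>n. M * c ^ n) \<longlonglongrightarrow> 0"
    using assms(4,5) by (intro tendsto_mult_right_zero LIMSEQ_power_zero) simp
  then have "\<forall>\<^sub>F n in sequentially. M * c ^ n < 1"
    by (rule order_tendstoD(2)) simp
  then have "\<forall>\<^sub>F n in sequentially. M * c ^ n < 1 \<and> v \<le> n"
    by (rule eventually_conj[OF _ eventually_ge_at_top])
  then obtain N where N: "M * c ^ N < 1" "v \<le> N"
    unfolding eventually_sequentially by blast
  define idx where "idx i = (if i < v then i else N)" for i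
  define z where "z = x \<circ> idx"
  define K where "K = \<rho> (x 0) (z 1) + (\<Sum>i\<in>{1..<v}. \<rho> (z i) (z (Suc i)))"
  have "inj_on idx {1..v}" using N(2) by (auto simp: inj_on_def idx_def)
  then have "inj_on z {1..v}"
    unfolding z_def using \<open>inj x\<close> by (blast intro: comp_inj_on inj_on_subset)
  have "\<rho> (x 0) (x p) \<le> M * K + M * c ^ N * \<rho> (x 0) (x (p - N))" if "p > N" for p
  proof -
    have "0 \<notin> idx ` {1..v}" "p \<notin> idx ` {1..v}"
      using N(2) \<open>p > N\<close> by (auto simp: idx_def)
    then have "x 0 \<notin> z ` {1..v}" "x p \<notin> z ` {1..v}" "x 0 \<noteq> x p"
      using \<open>inj x\<close> \<open>p > N\<close> by (auto simp: z_def image_comp[symmetric] inj_image_mem_iff inj_eq)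
    then have "\<rho> (x 0) (x p) \<le> M * (K + \<rho> (x N) (x p))"
      using bv_metric_polygon[OF assms(2) _ \<open>inj_on z {1..v}\<close>] assms(3) N(2)
      by (simp add: K_def z_def idx_def)
    also have "\<dots> \<le> M * (K + c ^ N * \<rho> (x 0) (x (p - N)))"
    proof -
      have "x p = (S ^^ N) (x (p - N))"
        using \<open>p > N\<close> unfolding x_def by (metis funpow_add comp_apply le_add_diff_inverse less_imp_le)
      then have "\<rho> (x N) (x p) \<le> c ^ N * \<rho> (x 0) (x (p - N))"
        using contraction_funpow_le[OF assms(4,6), of N x0 "x (p - N)"] by (simp add: x_def)
      then show ?thesis using \<open>M \<ge> 1\<close> by (intro mult_left_mono add_left_mono) simp_all
    qed
    finally show ?thesis by (simp add: algebra_simps)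
  qed
  moreover have "0 \<le> M * c ^ N" using \<open>M \<ge> 1\<close> assms(4) by simp
  ultimately have "\<exists>B. \<forall>p. \<rho> (x 0) (x p) \<le> B"
    using N assms(1) by (intro bounded_above_if_shift_recurrence[of N "M * c ^ N"]) auto
  then show ?thesis by (simp add: x_def)
qed

lemma orbit_cauchy_if_bounded:
  fixes \<rho> :: "'a \<Rightarrow> 'a \<Rightarrow> real"
  assumes "0 \<le> c" and "c < 1" and "\<forall>u w. \<rho> (S u) (S w) \<le> c * \<rho> u w"
    and "\<forall>p. \<rho> x0 ((S ^^ p) x0) \<le> B"
  shows "bv_cauchy \<rho> (\<lambda>n. (S ^^ n) x0)"
  unfolding bv_cauchy_def
proof (intro allI impI)
  fix \<epsilon> :: real
  assume "\<epsilon> > 0"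
  have "(\<lambda>n. c ^ n * B) \<longlonglongrightarrow> 0"
    using assms(1,2) by (intro tendsto_mult_left_zero LIMSEQ_power_zero) simp
  then obtain n0 where n0: "\<forall>n\<ge>n0. c ^ n * B < \<epsilon>"
    using order_tendstoD(2)[of _ 0 sequentially \<epsilon>] \<open>\<epsilon> > 0\<close>
    unfolding eventually_sequentially by blast
  have "\<rho> ((S ^^ n) x0) ((S ^^ (n + p)) x0) < \<epsilon>" if "n \<ge> n0" for n p
  proof -
    have "\<rho> ((S ^^ n) x0) ((S ^^ (n + p)) x0) = \<rho> ((S ^^ n) x0) ((S ^^ n) ((S ^^ p) x0))"
      by (simp add: funpow_add)
    also have "\<dots> \<le> c ^ n * \<rho> x0 ((S ^^ p) x0)"
      by (rule contraction_funpow_le[OF assms(1,3)])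
    also have "\<dots> \<le> c ^ n * B"
      using assms(1,4) by (simp add: mult_left_mono)
    also have "\<dots> < \<epsilon>" using n0 that by blast
    finally show ?thesis .
  qed
  then show "\<exists>n0. \<forall>n\<ge>n0. \<forall>p>0. \<rho> ((S ^^ n) x0) ((S ^^ (n + p)) x0) < \<epsilon>" by blast
qed

lemma orbit_step_tendsto_0:
  assumes "bv_metric v \<theta> \<rho>" and "0 \<le> c" and "c < 1" and "\<forall>u w. \<rho> (S u) (S w) \<le> c * \<rho> u w"
  shows "(\<lambda>n. \<rho> ((S ^^ n) x0) ((S ^^ Suc n) x0)) \<longlonglongrightarrow> 0"
proof (rule tendsto_sandwich)
  show "\<forall>\<^sub>F n in sequentially. 0 \<le> \<rho> ((S ^^ n) x0) ((S ^^ Suc n) x0)"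
    using bv_metric_nonneg[OF assms(1)] by simp
  show "\<forall>\<^sub>F n in sequentially. \<rho> ((S ^^ n) x0) ((S ^^ Suc n) x0) \<le> c ^ n * \<rho> x0 (S x0)"
    using contraction_funpow_le[OF assms(2,4), of _ x0 "S x0"] by (simp add: funpow_swap1)
  show "(\<lambda>n. c ^ n * \<rho> x0 (S x0)) \<longlonglongrightarrow> 0"
    using assms(2,3) by (intro tendsto_mult_left_zero LIMSEQ_power_zero) simp
qed simp

lemma inj_eventually_ne:
  fixes x :: "nat \<Rightarrow> 'a"
  assumes "inj x"
  shows "\<forall>\<^sub>F n in sequentially. x n \<noteq> y"
proof -
  have "finite (x -` {y})" using assms by (intro finite_vimageI) simp_all
  then show ?thesis by (simp add: vimage_def eventually_cofinite flip: cofinite_eq_sequentially)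
qed

lemma orbit_polygon_tendsto_0:
  assumes "v \<ge> 1" and "bv_metric v \<theta> \<rho>"
    and "0 \<le> c" and "c < 1" and "\<forall>u w. \<rho> (S u) (S w) \<le> c * \<rho> u w"
    and "bv_converges \<rho> (\<lambda>n. (S ^^ n) x0) l"
  shows "(\<lambda>n. \<rho> l ((S ^^ (n + 1)) x0)
      + (\<Sum>i\<in>{1..<v}. \<rho> ((S ^^ (n + i)) x0) ((S ^^ (n + Suc i)) x0))
      + \<rho> ((S ^^ (n + v)) x0) (S l)) \<longlonglongrightarrow> 0"
proof -
  define x where "x = (\<lambda>n. (S ^^ n) x0)"
  have to_l: "(\<lambda>n. \<rho> (x n) l) \<longlonglongrightarrow> 0"
    using assms(6) bv_converges_iff_tendsto[OF assms(2)] by (simp add: x_def)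
  have first: "(\<lambda>n. \<rho> l (x (n + 1))) \<longlonglongrightarrow> 0"
    using LIMSEQ_ignore_initial_segment[OF to_l, of 1] bv_metric_commute[OF assms(2)] by simp
  have middle: "(\<lambda>n. \<Sum>i\<in>{1..<v}. \<rho> (x (n + i)) (x (n + Suc i))) \<longlonglongrightarrow> 0"
    using LIMSEQ_ignore_initial_segment[OF orbit_step_tendsto_0[OF assms(2-5)]]
    by (intro tendsto_null_sum) (simp add: x_def)
  have last: "(\<lambda>n. \<rho> (x (n + v)) (S l)) \<longlonglongrightarrow> 0"
  proof (rule tendsto_sandwich[of "\<lambda>_. 0"])
    have "x (n + v) = S (x (n + (v - 1)))" for n
    proof -
      have "n + v = Suc (n + (v - 1))" using assms(1) by simp
      then show ?thesis unfolding x_def by (metis funpow.simps(2) o_apply)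
    qed
    then show "\<forall>\<^sub>F n in sequentially. \<rho> (x (n + v)) (S l) \<le> c * \<rho> (x (n + (v - 1))) l"
      using assms(5) by simp
    show "(\<lambda>n. c * \<rho> (x (n + (v - 1))) l) \<longlonglongrightarrow> 0"
      using LIMSEQ_ignore_initial_segment[OF to_l] by (rule tendsto_mult_right_zero)
  qed (use bv_metric_nonneg[OF assms(2)] in simp_all)
  show ?thesis
    using tendsto_add[OF tendsto_add[OF first middle] last] by (simp add: x_def)
qed

lemma orbit_limit_is_fixpoint:
  assumes "v \<ge> 1" and "bv_metric v \<theta> \<rho>" and "\<forall>u w. \<theta> u w \<le> M"
    and "0 \<le> c" and "c < 1" and "\<forall>u w. \<rho> (S u) (S w) \<le> c * \<rho> u w"
    and "inj (\<lambda>n. (S ^^ n) x0)" and "bv_converges \<rho> (\<lambda>n. (S ^^ n) x0) l"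
  shows "S l = l"
proof (rule ccontr)
  assume "S l \<noteq> l"
  define x where "x = (\<lambda>n. (S ^^ n) x0)"
  have "inj x" unfolding x_def by (rule assms(7))
  define polygon where "polygon = (\<lambda>n.
    \<rho> l (x (n + 1)) + (\<Sum>i\<in>{1..<v}. \<rho> (x (n + i)) (x (n + Suc i))) + \<rho> (x (n + v)) (S l))"
  have "polygon \<longlonglongrightarrow> 0"
    unfolding polygon_def x_def by (rule orbit_polygon_tendsto_0[OF assms(1,2,4-6,8)])
  have "\<forall>\<^sub>F k in sequentially. x k \<noteq> l \<and> x k \<noteq> S l"
    using inj_eventually_ne[OF \<open>inj x\<close>, of l] inj_eventually_ne[OF \<open>inj x\<close>, of "S l"]
    by (rule eventually_conj)
  then have "\<forall>\<^sub>F n in sequentially. \<forall>k\<ge>n. x k \<noteq> l \<and> x k \<noteq> S l"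
    by (rule eventually_all_ge_at_top)
  then have "\<forall>\<^sub>F n in sequentially. \<rho> l (S l) \<le> M * polygon n"
  proof (rule eventually_mono)
    fix n
    assume far: "\<forall>k\<ge>n. x k \<noteq> l \<and> x k \<noteq> S l"
    have "inj_on (\<lambda>i. x (n + i)) {1..v}"
      using \<open>inj x\<close> by (simp add: inj_on_def inj_eq[OF \<open>inj x\<close>])
    moreover have "l \<notin> (\<lambda>i. x (n + i)) ` {1..v}" "S l \<notin> (\<lambda>i. x (n + i)) ` {1..v}"
      using far by (metis (no_types, lifting) imageE le_add1)+
    ultimately show "\<rho> l (S l) \<le> M * polygon n"
      using bv_metric_polygon[OF assms(2) assms(3)[rule_format], where z = "\<lambda>i. x (n + i)"]
        \<open>S l \<noteq> l\<close>
      by (simp add: polygon_def)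
  qed
  then have "\<rho> l (S l) \<le> M * 0"
    using \<open>polygon \<longlonglongrightarrow> 0\<close> by (intro tendsto_lowerbound[of "\<lambda>n. M * polygon n"] tendsto_mult) auto
  then show False
    using \<open>S l \<noteq> l\<close> bv_metric_nonneg[OF assms(2)] bv_metric_eq_0_iff[OF assms(2)]
    by (metis antisym mult_zero_right)
qed

theorem mainTheorem9:
  fixes v :: nat and \<theta> \<rho> :: "'a \<Rightarrow> 'a \<Rightarrow> real" and S :: "'a \<Rightarrow> 'a"
  assumes "v \<ge> 1"
    and "bv_metric v \<theta> \<rho>"
    and "bv_complete \<rho>"
    and "\<exists>M. \<forall>u w. \<theta> u w \<le> M"
    and "\<exists>c::real. 0 \<le> c \<and> c < 1 \<and> (\<forall>u w. \<rho> (S u) (S w) \<le> c * \<rho> u w)"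
  shows "\<exists>!x. S x = x"
proof -
  obtain M where M: "\<forall>u w. \<theta> u w \<le> M" using assms(4) by blast
  obtain c where c: "0 \<le> c" "c < 1" and contraction: "\<forall>u w. \<rho> (S u) (S w) \<le> c * \<rho> u w"
    using assms(5) by blast
  have "\<exists>x. S x = x"
  proof (rule ccontr)
    assume "\<nexists>x. S x = x"
    fix x0 :: 'a
    have inj: "inj (\<lambda>n. (S ^^ n) x0)"
      using orbit_inj_if_no_fixpoint[OF assms(2) c contraction] \<open>\<nexists>x. S x = x\<close> by blast
    then obtain B where "\<forall>p. \<rho> x0 ((S ^^ p) x0) \<le> B"
      using orbit_bounded[OF assms(1,2) M c contraction] by blast
    then have "bv_cauchy \<rho> (\<lambda>n. (S ^^ n) x0)"
      by (rule orbit_cauchy_if_bounded[OF c contraction])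
    then obtain l where "bv_converges \<rho> (\<lambda>n. (S ^^ n) x0) l"
      using assms(3) unfolding bv_complete_def by blast
    then have "S l = l"
      by (rule orbit_limit_is_fixpoint[OF assms(1,2) M c contraction inj])
    then show False using \<open>\<nexists>x. S x = x\<close> by blast
  qed
  then show ?thesis
    using contraction_fixpoint_unique[OF assms(2) c(2) contraction] by blast
qed

end
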